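(* Let $S$ be a finite set of training examples, each $i\in S$ having weight $w_i>0$ and label $y_i\in Y$, where $Y$ is a finite label set. Let $S$ be partitioned into a finite family $R$ of nonempty leaves, and let $A\subseteq S$ be the set of assessed (seen) examples. For a leaf $\rho\in R$ and $y\in Y$ write $Z_\rho=\sum_{i\in\rho}w_i$, $Z_\rho^y=\sum_{i\in\rho,\,y_i=y}w_i$, $Z_u(\rho)=\sum_{i\in\rho\cap A}w_i$, $Z_u^y(\rho)=\sum_{i\in\rho\cap A,\,y_i=y}w_i$, and let $Z_n=\sum_{i\in S}w_i$, $w=\sum_{i\in S\setminus A}w_i$, $w^y=\sum_{i\in S\setminus A,\,y_i=y}w_i$. Define \[ \epsilon_n := \sum_{\rho\in R}\frac{Z_\rho}{Z_n}\left(-\sum_{y\in Y}\frac{Z_\rho^y}{Z_\rho}\lg\frac{Z_\rho^y}{Z_\rho}\right),\qquad Z_u\epsilon_u(\rho) := -\sum_{y\in Y}Z_u^y(\rho)\lg\frac{Z_u^y(\rho)}{Z_u(\rho)}. \] Assume $Z_u^y(\rho)>0$ for every $\rho\in R$ and $y\in Y$. Then \[ \sum_{\rho\in R} Z_u\epsilon_u(\rho) \;\le\; Z_n\epsilon_n \;\le\; \sum_{\rho\in R}\left[Z_u\epsilon_u(\rho) + w\lg|Y| + \sum_{y\in Y}\bigl(Z_u^y(\rho)+w^y\bigr)\lg\frac{Z_u(\rho)+w}{Z_u^y(\rho)}\right]. \]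
   Context: $\lg$ is the base-2 logarithm with the convention $0\lg 0=0$. $\epsilon_n$ is the conditional label entropy of the leaves (the "error" term used for information-gain splitting), computed with all examples; $Z_u\epsilon_u(\rho)$ is the corresponding weighted entropy computed only on the seen examples of leaf $\rho$. *)

theory Defs
  imports Complex_Main "HOL-Library.Disjoint_Sets"
begin

definition lg :: "real \<Rightarrow> real" where "lg x = log 2 x"

definition plg :: "real \<Rightarrow> real" where
  "plg p = (if p = 0 then 0 else p * lg p)"

definition eps_n :: "'a set \<Rightarrow> 'a set set \<Rightarrow> ('a \<Rightarrow> real) \<Rightarrow> ('a \<Rightarrow> 'b) \<Rightarrow> 'b set \<Rightarrow> real" where
  "eps_n S R w lab Y =
     (\<Sum>\<rho>\<in>R. (sum w \<rho> / sum w S) *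
        (- (\<Sum>y\<in>Y. plg (sum w {i\<in>\<rho>. lab i = y} / sum w \<rho>))))"

definition Zu_eps_u :: "'a set \<Rightarrow> ('a \<Rightarrow> real) \<Rightarrow> ('a \<Rightarrow> 'b) \<Rightarrow> 'b set \<Rightarrow> 'a set \<Rightarrow> real" where
  "Zu_eps_u A w lab Y \<rho> =
     - (\<Sum>y\<in>Y. sum w {i\<in>\<rho> \<inter> A. lab i = y} *
          lg (sum w {i\<in>\<rho> \<inter> A. lab i = y} / sum w (\<rho> \<inter> A)))"

end

theory Submission
  imports Defs
begin

text \<open>Write \<open>a\<^sub>y\<close> and \<open>b\<^sub>y\<close> for the seen and the total weight of label \<open>y\<close> in a leaf, so
  that \<open>a \<le> b \<le> a + w\<^sup>y\<close>. Both sides of the theorem are sums over the leaves of the unnormalised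
  entropy \<open>H(a) = \<Sum>\<^sub>y a\<^sub>y lg (\<Sum>a / a\<^sub>y)\<close>. The lower bound is monotonicity of \<open>H\<close>:
  Gibbs' inequality bounds \<open>H(a)\<close> by the cross entropy \<open>\<Sum>\<^sub>y a\<^sub>y lg (\<Sum>b / b\<^sub>y)\<close>, which is at most
  \<open>H(b)\<close> because every logarithm is nonnegative. The upper bound compares \<open>H(b)\<close> termwise:
  \<open>b\<^sub>y \<le> a\<^sub>y + w\<^sup>y\<close> and \<open>\<Sum>b / b\<^sub>y \<le> (\<Sum>a + w) / a\<^sub>y\<close>; the remaining terms are nonnegative slack.\<close>

definition label_weight :: "('a \<Rightarrow> real) \<Rightarrow> ('a \<Rightarrow> 'b) \<Rightarrow> 'a set \<Rightarrow> 'b \<Rightarrow> real" where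
  "label_weight w lab \<rho> y = sum w {i\<in>\<rho>. lab i = y}"

definition mass_entropy :: "('b \<Rightarrow> real) \<Rightarrow> 'b set \<Rightarrow> real" where
  "mass_entropy a Y = (\<Sum>y\<in>Y. a y * lg (sum a Y / a y))"

lemma lg_le_minus_one: "0 < x \<Longrightarrow> lg x \<le> (x - 1) / ln 2"
  unfolding lg_def log_def using ln_le_minus_one[of x] by (simp add: divide_right_mono)

lemma lg_nonneg: "1 \<le> x \<Longrightarrow> 0 \<le> lg x"
  unfolding lg_def by simp

lemma lg_mono: "0 < x \<Longrightarrow> x \<le> y \<Longrightarrow> lg x \<le> lg y"
  unfolding lg_def by simp

lemma lg_of_nat_nonneg: "0 \<le> lg (real n)"
  by (cases "n = 0") (auto simp: lg_def log_def)

lemma mult_lg_div_commute: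
  assumes "0 \<le> x" and "0 \<le> y"
  shows "x * lg (y / x) = - (x * lg (x / y))"
  using assms by (cases "x = 0 \<or> y = 0") (auto simp: lg_def log_divide algebra_simps)

lemma mass_entropy_nonneg:
  assumes "finite Y" and "\<forall>y\<in>Y. 0 \<le> a y"
  shows "0 \<le> mass_entropy a Y"
  unfolding mass_entropy_def
proof (rule sum_nonneg)
  fix y assume y: "y \<in> Y"
  have "a y \<le> sum a Y" using assms y by (intro member_le_sum) auto
  show "0 \<le> a y * lg (sum a Y / a y)"
  proof (cases "a y = 0")
    case False
    then have "0 < a y" using assms(2) y by force
    with \<open>a y \<le> sum a Y\<close> show ?thesis by (simp add: lg_nonneg)
  qed simp
qed

lemma mass_entropy_eq_neg_sum:
  assumes "\<forall>y\<in>Y. 0 \<le> a y"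
  shows "mass_entropy a Y = - (\<Sum>y\<in>Y. a y * lg (a y / sum a Y))"
  unfolding mass_entropy_def sum_negf[symmetric]
  using assms sum_nonneg[of Y a] by (intro sum.cong) (simp_all add: mult_lg_div_commute)

lemma mass_entropy_eq_plg:
  assumes "\<forall>y\<in>Y. 0 \<le> a y"
  shows "mass_entropy a Y = sum a Y * - (\<Sum>y\<in>Y. plg (a y / sum a Y))"
  unfolding mass_entropy_eq_neg_sum[OF assms] sum_negf[symmetric] sum_distrib_left
  by (intro sum.cong) (auto simp: plg_def lg_def log_def)

lemma gibbs_inequality:
  assumes fin: "finite Y" and apos: "\<forall>y\<in>Y. 0 < a y" and bpos: "\<forall>y\<in>Y. 0 < b y"
  shows "mass_entropy a Y \<le> (\<Sum>y\<in>Y. a y * lg (sum b Y / b y))"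
proof (cases "Y = {}")
  case True
  then show ?thesis by (simp add: mass_entropy_def)
next
  case False
  define Za Zb where "Za = sum a Y" and "Zb = sum b Y"
  have Za: "0 < Za" and Zb: "0 < Zb"
    unfolding Za_def Zb_def using False fin apos bpos by (auto intro: sum_pos)
  have termwise: "a y * lg (Za / a y) - a y * lg (Zb / b y) \<le> (Za * b y / Zb - a y) / ln 2"
    if y: "y \<in> Y" for y
  proof -
    have pa: "0 < a y" and pb: "0 < b y" using apos bpos y by auto
    have "a y * lg (Za / a y) - a y * lg (Zb / b y) = a y * lg ((Za * b y) / (a y * Zb))"
      unfolding lg_def using pa pb Za Zb by (simp add: log_divide log_mult algebra_simps)
    also have "\<dots> \<le> a y * (((Za * b y) / (a y * Zb) - 1) / ln 2)"
      using pa pb Za Zb by (intro mult_left_mono lg_le_minus_one) auto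
    also have "\<dots> = (Za * b y / Zb - a y) / ln 2"
      using pa Zb by (simp add: field_simps)
    finally show ?thesis .
  qed
  have "mass_entropy a Y - (\<Sum>y\<in>Y. a y * lg (Zb / b y))
      \<le> (\<Sum>y\<in>Y. (Za * b y / Zb - a y) / ln 2)"
    unfolding mass_entropy_def Za_def[symmetric] sum_subtractf[symmetric]
    using termwise by (intro sum_mono) auto
  also have "\<dots> = (Za * Zb / Zb - Za) / ln 2"
    unfolding sum_divide_distrib[symmetric] sum_subtractf Za_def Zb_def
    by (simp add: sum_distrib_left[symmetric] sum_divide_distrib[symmetric])
  also have "\<dots> = 0" using Zb by simp
  finally show ?thesis unfolding Zb_def by simp
qed

lemma mass_entropy_mono:
  assumes fin: "finite Y" and apos: "\<forall>y\<in>Y. 0 < a y" and ab: "\<forall>y\<in>Y. a y \<le> b y"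
  shows "mass_entropy a Y \<le> mass_entropy b Y"
proof -
  have bpos: "\<forall>y\<in>Y. 0 < b y" using apos ab by force
  have "(\<Sum>y\<in>Y. a y * lg (sum b Y / b y)) \<le> mass_entropy b Y"
    unfolding mass_entropy_def
  proof (rule sum_mono)
    fix y assume y: "y \<in> Y"
    have "b y \<le> sum b Y" using fin y bpos by (intro member_le_sum) auto
    then have "0 \<le> lg (sum b Y / b y)" using bpos y by (intro lg_nonneg) simp
    then show "a y * lg (sum b Y / b y) \<le> b y * lg (sum b Y / b y)"
      using ab y by (simp add: mult_right_mono)
  qed
  with gibbs_inequality[OF fin apos bpos] show ?thesis by linarith
qed

lemma mass_entropy_le_shifted:
  assumes fin: "finite Y" and apos: "\<forall>y\<in>Y. 0 < a y" and ab: "\<forall>y\<in>Y. a y \<le> b y"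
    and bV: "\<forall>y\<in>Y. b y \<le> a y + V y" and ZW: "sum b Y \<le> sum a Y + W"
  shows "mass_entropy b Y \<le> (\<Sum>y\<in>Y. (a y + V y) * lg ((sum a Y + W) / a y))"
  unfolding mass_entropy_def
proof (rule sum_mono)
  fix y assume y: "y \<in> Y"
  have pa: "0 < a y" and pb: "0 < b y" using apos ab y by force+
  have "b y \<le> sum b Y" using fin y apos ab by (intro member_le_sum) force+
  then have lg_b: "0 \<le> lg (sum b Y / b y)" using pb by (intro lg_nonneg) simp
  have "sum b Y / b y \<le> (sum a Y + W) / a y"
    using ZW ab y pa pb \<open>b y \<le> sum b Y\<close> by (simp add: frac_le)
  then have lg_le: "lg (sum b Y / b y) \<le> lg ((sum a Y + W) / a y)"
    using pb \<open>b y \<le> sum b Y\<close> by (intro lg_mono) auto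
  have "b y * lg (sum b Y / b y) \<le> b y * lg ((sum a Y + W) / a y)"
    using lg_le pb by (simp add: mult_left_mono)
  also have "\<dots> \<le> (a y + V y) * lg ((sum a Y + W) / a y)"
    using bV y lg_b lg_le by (intro mult_right_mono) auto
  finally show "b y * lg (sum b Y / b y) \<le> (a y + V y) * lg ((sum a Y + W) / a y)" .
qed

lemma sum_label_weight:
  assumes "finite \<rho>" and "finite Y" and "lab ` \<rho> \<subseteq> Y"
  shows "sum (label_weight w lab \<rho>) Y = sum w \<rho>"
  unfolding label_weight_def using assms by (intro sum.group) auto

lemma label_weight_mono:
  assumes "finite T" and "\<rho> \<subseteq> T" and "\<forall>i\<in>T. 0 \<le> w i"
  shows "label_weight w lab \<rho> y \<le> label_weight w lab T y"
  unfolding label_weight_def using assms by (intro sum_mono2) auto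

lemma label_weight_le_seen_plus_unseen:
  assumes "finite S" and "\<rho> \<subseteq> S" and "\<forall>i\<in>S. 0 \<le> w i"
  shows "label_weight w lab \<rho> y \<le> label_weight w lab (\<rho> \<inter> A) y + label_weight w lab (S - A) y"
proof -
  have split: "{i\<in>\<rho>. lab i = y} = {i\<in>\<rho> \<inter> A. lab i = y} \<union> {i\<in>\<rho> - A. lab i = y}" by blast
  have "label_weight w lab \<rho> y = label_weight w lab (\<rho> \<inter> A) y + label_weight w lab (\<rho> - A) y"
    unfolding label_weight_def split
    using assms by (intro sum.union_disjoint) (auto intro: finite_subset)
  also have "label_weight w lab (\<rho> - A) y \<le> label_weight w lab (S - A) y"
    using assms by (intro label_weight_mono) auto
  finally show ?thesis by simp
qed

lemma sum_le_seen_plus_unseen: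
  fixes w :: "'a \<Rightarrow> real"
  assumes "finite S" and "\<rho> \<subseteq> S" and "\<forall>i\<in>S. 0 \<le> w i"
  shows "sum w \<rho> \<le> sum w (\<rho> \<inter> A) + sum w (S - A)"
proof -
  have "sum w \<rho> = sum w (\<rho> \<inter> A) + sum w (\<rho> - A)"
    using assms by (metis finite_subset sum.Int_Diff)
  also have "sum w (\<rho> - A) \<le> sum w (S - A)"
    by (rule sum_mono2) (use assms in auto)
  finally show ?thesis by simp
qed

lemma Zu_eps_u_eq_mass_entropy:
  assumes "finite \<rho>" and "finite Y" and "lab ` \<rho> \<subseteq> Y" and "\<forall>i\<in>\<rho>. 0 \<le> w i"
  shows "Zu_eps_u A w lab Y \<rho> = mass_entropy (label_weight w lab (\<rho> \<inter> A)) Y"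
proof -
  let ?a = "label_weight w lab (\<rho> \<inter> A)"
  have "sum ?a Y = sum w (\<rho> \<inter> A)"
    using assms by (intro sum_label_weight) auto
  then have "Zu_eps_u A w lab Y \<rho> = - (\<Sum>y\<in>Y. ?a y * lg (?a y / sum ?a Y))"
    unfolding Zu_eps_u_def label_weight_def by simp
  also have "\<dots> = mass_entropy ?a Y"
    using assms(4) by (intro mass_entropy_eq_neg_sum[symmetric]) (auto simp: label_weight_def intro: sum_nonneg)
  finally show ?thesis .
qed

lemma sum_mult_eps_n:
  assumes "finite S" and "finite Y" and "\<forall>i\<in>S. 0 < w i" and "\<forall>i\<in>S. lab i \<in> Y"
    and "partition_on S R"
  shows "sum w S * eps_n S R w lab Y = (\<Sum>\<rho>\<in>R. mass_entropy (label_weight w lab \<rho>) Y)"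
proof (cases "S = {}")
  case True
  then have "R = {}" using assms(5) partition_on_empty by auto
  then show ?thesis unfolding eps_n_def by simp
next
  case False
  then have "0 < sum w S" using assms by (intro sum_pos) auto
  then have "sum w S * eps_n S R w lab Y
      = (\<Sum>\<rho>\<in>R. sum w \<rho> * - (\<Sum>y\<in>Y. plg (label_weight w lab \<rho> y / sum w \<rho>)))"
    unfolding eps_n_def sum_distrib_left label_weight_def by (intro sum.cong) auto
  also have "\<dots> = (\<Sum>\<rho>\<in>R. mass_entropy (label_weight w lab \<rho>) Y)"
  proof (rule sum.cong)
    fix \<rho> assume r: "\<rho> \<in> R"
    have leaf: "\<rho> \<subseteq> S" using assms(5) r unfolding partition_on_def by auto
    then have Z: "sum (label_weight w lab \<rho>) Y = sum w \<rho>"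
      using assms by (intro sum_label_weight) (auto intro: finite_subset)
    have "\<forall>y\<in>Y. 0 \<le> label_weight w lab \<rho> y"
      using assms(3) leaf unfolding label_weight_def by (auto intro: sum_nonneg less_imp_le)
    from mass_entropy_eq_plg[OF this]
    show "sum w \<rho> * - (\<Sum>y\<in>Y. plg (label_weight w lab \<rho> y / sum w \<rho>))
        = mass_entropy (label_weight w lab \<rho>) Y"
      unfolding Z by simp
  qed simp
  finally show ?thesis .
qed

lemma leaf_entropy_bounds:
  assumes fin: "finite S" "finite Y" and wpos: "\<forall>i\<in>S. 0 < w i"
    and labY: "\<forall>i\<in>S. lab i \<in> Y" and leaf: "\<rho> \<subseteq> S"
    and seen_pos: "\<forall>y\<in>Y. 0 < label_weight w lab (\<rho> \<inter> A) y"
  shows "Zu_eps_u A w lab Y \<rho> \<le> mass_entropy (label_weight w lab \<rho>) Y"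
    and "mass_entropy (label_weight w lab \<rho>) Y
      \<le> Zu_eps_u A w lab Y \<rho> + sum w (S - A) * lg (real (card Y))
         + (\<Sum>y\<in>Y. (label_weight w lab (\<rho> \<inter> A) y + label_weight w lab (S - A) y)
              * lg ((sum w (\<rho> \<inter> A) + sum w (S - A)) / label_weight w lab (\<rho> \<inter> A) y))"
proof -
  let ?a = "label_weight w lab (\<rho> \<inter> A)" and ?b = "label_weight w lab \<rho>"
  have wnn: "\<forall>i\<in>S. 0 \<le> w i" using wpos by (auto intro: less_imp_le)
  have fr: "finite \<rho>" and labr: "lab ` \<rho> \<subseteq> Y"
    using fin leaf labY by (auto intro: finite_subset)
  have Zu: "Zu_eps_u A w lab Y \<rho> = mass_entropy ?a Y"
    using fr fin labr leaf wnn by (intro Zu_eps_u_eq_mass_entropy) auto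
  have Za: "sum ?a Y = sum w (\<rho> \<inter> A)"
    using fr fin labr by (intro sum_label_weight) auto
  have ab: "\<forall>y\<in>Y. ?a y \<le> ?b y"
    using fr leaf wnn by (auto intro: label_weight_mono)
  show "Zu_eps_u A w lab Y \<rho> \<le> mass_entropy ?b Y"
    unfolding Zu using fin seen_pos ab by (intro mass_entropy_mono)
  have "sum ?b Y \<le> sum ?a Y + sum w (S - A)"
    unfolding Za sum_label_weight[OF fr fin(2) labr]
    using fin(1) leaf wnn by (rule sum_le_seen_plus_unseen)
  then have "mass_entropy ?b Y
      \<le> (\<Sum>y\<in>Y. (?a y + label_weight w lab (S - A) y)
              * lg ((sum w (\<rho> \<inter> A) + sum w (S - A)) / ?a y))"
    unfolding Za[symmetric] using fin leaf wnn seen_pos ab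
    by (intro mass_entropy_le_shifted) (auto intro: label_weight_le_seen_plus_unseen)
  moreover have "0 \<le> Zu_eps_u A w lab Y \<rho> + sum w (S - A) * lg (real (card Y))"
    unfolding Zu using fin seen_pos wnn
    by (intro add_nonneg_nonneg mass_entropy_nonneg mult_nonneg_nonneg sum_nonneg lg_of_nat_nonneg)
      (auto intro: less_imp_le)
  ultimately show "mass_entropy ?b Y
      \<le> Zu_eps_u A w lab Y \<rho> + sum w (S - A) * lg (real (card Y))
         + (\<Sum>y\<in>Y. (?a y + label_weight w lab (S - A) y)
              * lg ((sum w (\<rho> \<inter> A) + sum w (S - A)) / ?a y))"
    by linarith
qed

theorem mainTheorem4:
  fixes S A :: "'a set" and R :: "'a set set" and w :: "'a \<Rightarrow> real"
    and lab :: "'a \<Rightarrow> 'b" and Y :: "'b set"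
  assumes "finite S" and "finite Y" and "finite R"
    and "\<forall>i\<in>S. w i > 0"
    and "\<forall>i\<in>S. lab i \<in> Y"
    and "partition_on S R"
    and "A \<subseteq> S"
    and "\<forall>\<rho>\<in>R. \<forall>y\<in>Y. sum w {i\<in>\<rho> \<inter> A. lab i = y} > 0"
  shows "(\<Sum>\<rho>\<in>R. Zu_eps_u A w lab Y \<rho>) \<le> sum w S * eps_n S R w lab Y
    \<and> sum w S * eps_n S R w lab Y \<le>
      (\<Sum>\<rho>\<in>R. Zu_eps_u A w lab Y \<rho> + sum w (S - A) * lg (real (card Y))
         + (\<Sum>y\<in>Y. (sum w {i\<in>\<rho> \<inter> A. lab i = y} + sum w {i\<in>S - A. lab i = y})
              * lg ((sum w (\<rho> \<inter> A) + sum w (S - A)) / sum w {i\<in>\<rho> \<inter> A. lab i = y})))"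
proof -
  have leaf: "\<rho> \<subseteq> S" if "\<rho> \<in> R" for \<rho>
    using assms(6) that unfolding partition_on_def by auto
  have seen_pos: "\<forall>y\<in>Y. 0 < label_weight w lab (\<rho> \<inter> A) y" if "\<rho> \<in> R" for \<rho>
    using assms(8) that unfolding label_weight_def by auto
  have Zn_eps_n: "sum w S * eps_n S R w lab Y = (\<Sum>\<rho>\<in>R. mass_entropy (label_weight w lab \<rho>) Y)"
    using assms(1,2,4,5,6) by (rule sum_mult_eps_n)
  note bounds = leaf_entropy_bounds[OF assms(1,2,4,5) leaf seen_pos]
  show ?thesis
    unfolding Zn_eps_n label_weight_def[symmetric]
    using bounds by (intro conjI sum_mono)
qed

end
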